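(* Let $f_0(n)=1$ for odd $n$ and $f_0(n)=0$ for even $n$. Then for $1\le k\le n$, $c_1(n,k)$ equals the number of binary words of length $n-1$ with exactly $k-1$ ones that avoid runs of zeros of odd length (every maximal block of consecutive zeros has even length).
   Context: The numbers $c_1(n,k)$, $0\le k\le n$, are defined by $c_1(0,0)=1$, $c_1(n,0)=0$ for $n\ge1$, and $c_1(n,k)=\sum_{i=1}^{n-k+1}f_{0}(i)\,c_1(n-i,k-1)$ for $1\le k\le n$. Words may be empty. *)

theory Defs
  imports Main
begin

definition f0 :: "nat \<Rightarrow> nat" where
  "f0 n = (if odd n then 1 else 0)"

fun c1 :: "nat \<Rightarrow> nat \<Rightarrow> nat" where
  "c1 n 0 = (if n = 0 then 1 else 0)"
| "c1 n (Suc k) = (\<Sum>i = 1..n - Suc k + 1. f0 i * c1 (n - i) k)"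

text \<open>Binary words are lists of booleans; True is a one, False is a zero.
  A maximal run of zeros is a block of positions i..j (inclusive), all zeros,
  not extendable to the left or right.\<close>

definition max_zero_run :: "bool list \<Rightarrow> nat \<Rightarrow> nat \<Rightarrow> bool" where
  "max_zero_run w i j \<longleftrightarrow> i \<le> j \<and> j < length w
     \<and> (\<forall>p. i \<le> p \<and> p \<le> j \<longrightarrow> \<not> w ! p)
     \<and> (i = 0 \<or> w ! (i - 1))
     \<and> (j + 1 = length w \<or> w ! (j + 1))"

definition avoids_odd_zero_runs :: "bool list \<Rightarrow> bool" where
  "avoids_odd_zero_runs w \<longleftrightarrow> (\<forall>i j. max_zero_run w i j \<longrightarrow> even (j - i + 1))"

definition count_ones :: "bool list \<Rightarrow> nat" where
  "count_ones w = length (filter id w)"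

end

theory Submission
  imports Defs
begin

text \<open>A word containing a one factors uniquely as \<open>0\<^sup>a 1 w\<close>, splitting at its first one.
  Its maximal zero runs are the leading block \<open>0\<^sup>a\<close> (when \<open>a > 0\<close>) and the runs of \<open>w\<close>
  shifted by \<open>a + 1\<close>, so it avoids odd zero runs iff \<open>a\<close> is even and \<open>w\<close> does. Counting words
  by the position \<open>i = a + 1\<close> of the first one reproduces the recurrence for \<open>c1\<close>, where
  \<open>f0 i\<close> selects the admissible (odd) \<open>i\<close>; words without ones give the base case.\<close>

lemma max_zero_run_replicate_False:
  "max_zero_run (replicate m False) i j \<longleftrightarrow> 0 < m \<and> i = 0 \<and> j = m - 1"
  unfolding max_zero_run_def by (auto simp del: replicate_Suc)

lemma avoids_odd_zero_runs_replicate_False: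
  "avoids_odd_zero_runs (replicate m False) \<longleftrightarrow> even m"
  unfolding avoids_odd_zero_runs_def max_zero_run_replicate_False by auto

lemma max_zero_run_append_True_cases:
  assumes "max_zero_run (u @ True # w) i j"
  shows "j < length u \<or> length u < i"
  using assms unfolding max_zero_run_def
  by (metis linorder_not_le nth_append_length)

lemma max_zero_run_append_True_shift:
  "max_zero_run (u @ True # w) (i + length u + 1) (j + length u + 1) \<longleftrightarrow> max_zero_run w i j"
proof -
  let ?v = "u @ True # w"
  have nth_shift: "?v ! (p + length u + 1) = w ! p" for p
    by (simp add: nth_append)
  have zeros: "(\<forall>p. i + length u + 1 \<le> p \<and> p \<le> j + length u + 1 \<longrightarrow> \<not> ?v ! p)
      \<longleftrightarrow> (\<forall>p. i \<le> p \<and> p \<le> j \<longrightarrow> \<not> w ! p)"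
  proof
    assume "\<forall>p. i + length u + 1 \<le> p \<and> p \<le> j + length u + 1 \<longrightarrow> \<not> ?v ! p"
    then show "\<forall>p. i \<le> p \<and> p \<le> j \<longrightarrow> \<not> w ! p"
      by (metis add_le_cancel_right nth_shift)
  next
    assume *: "\<forall>p. i \<le> p \<and> p \<le> j \<longrightarrow> \<not> w ! p"
    show "\<forall>p. i + length u + 1 \<le> p \<and> p \<le> j + length u + 1 \<longrightarrow> \<not> ?v ! p"
    proof (intro allI impI)
      fix p assume "i + length u + 1 \<le> p \<and> p \<le> j + length u + 1"
      then obtain q where "p = q + length u + 1" "i \<le> q" "q \<le> j"
        by (metis add_le_cancel_right le_add_diff_inverse2 le_trans le_add2)
      then show "\<not> ?v ! p" using * nth_shift by simp
    qed
  qed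
  have left: "(i + length u + 1 = 0 \<or> ?v ! (i + length u + 1 - 1)) \<longleftrightarrow> i = 0 \<or> w ! (i - 1)"
    using nth_shift[of "i - 1"] by (cases i) (simp_all add: nth_append)
  have right: "?v ! (j + length u + 1 + 1) = w ! (j + 1)"
    using nth_shift[of "j + 1"] by (simp add: algebra_simps)
  show ?thesis
    unfolding max_zero_run_def zeros left right by auto
qed

lemma max_zero_run_replicate_False_append_True:
  assumes "j < m"
  shows "max_zero_run (replicate m False @ True # w) i j \<longleftrightarrow> i = 0 \<and> j = m - 1"
proof -
  let ?v = "replicate m False @ True # w"
  have nth_v: "?v ! p \<longleftrightarrow> p = m" if "p \<le> m" for p
    using that by (auto simp: nth_append)
  show ?thesis
  proof
    assume "max_zero_run ?v i j"
    then have "i = 0 \<or> ?v ! (i - 1)" "j + 1 = length ?v \<or> ?v ! (j + 1)" "i \<le> j"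
      unfolding max_zero_run_def by auto
    then show "i = 0 \<and> j = m - 1"
      using assms nth_v[of "i - 1"] nth_v[of "j + 1"] by auto
  next
    assume "i = 0 \<and> j = m - 1"
    then show "max_zero_run ?v i j"
      using assms nth_v unfolding max_zero_run_def by auto
  qed
qed

lemma avoids_odd_zero_runs_replicate_False_append_True:
  "avoids_odd_zero_runs (replicate m False @ True # w) \<longleftrightarrow> even m \<and> avoids_odd_zero_runs w"
  (is "avoids_odd_zero_runs ?v \<longleftrightarrow> _")
proof
  assume avoids: "avoids_odd_zero_runs ?v"
  have "even m"
  proof (cases "m = 0")
    case False
    then have "max_zero_run ?v 0 (m - 1)"
      by (simp add: max_zero_run_replicate_False_append_True)
    then have "even (m - 1 - 0 + 1)"
      using avoids unfolding avoids_odd_zero_runs_def by blast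
    then show ?thesis using False by simp
  qed simp
  moreover have "avoids_odd_zero_runs w"
    unfolding avoids_odd_zero_runs_def
  proof (intro allI impI)
    fix i j assume "max_zero_run w i j"
    then have "max_zero_run ?v (i + m + 1) (j + m + 1)"
      using max_zero_run_append_True_shift[of "replicate m False"] by simp
    then have "even (j + m + 1 - (i + m + 1) + 1)"
      using avoids unfolding avoids_odd_zero_runs_def by blast
    then show "even (j - i + 1)" by simp
  qed
  ultimately show "even m \<and> avoids_odd_zero_runs w" ..
next
  assume avoids: "even m \<and> avoids_odd_zero_runs w"
  show "avoids_odd_zero_runs ?v"
    unfolding avoids_odd_zero_runs_def
  proof (intro allI impI)
    fix i j assume run: "max_zero_run ?v i j"
    then consider "j < m" | "m < i" "i \<le> j"
      using max_zero_run_append_True_cases[of "replicate m False"]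
      unfolding max_zero_run_def by auto
    then show "even (j - i + 1)"
    proof cases
      case 1
      then show ?thesis using run avoids by (simp add: max_zero_run_replicate_False_append_True)
    next
      case 2
      define i' j' where "i' = i - m - 1" and "j' = j - m - 1"
      have "i = i' + m + 1" "j = j' + m + 1"
        using 2 unfolding i'_def j'_def by auto
      moreover from run this have "max_zero_run w i' j'"
        using max_zero_run_append_True_shift[of "replicate m False"] by simp
      ultimately show ?thesis using avoids unfolding avoids_odd_zero_runs_def by auto
    qed
  qed
qed

lemma count_ones_replicate_False_append_True:
  "count_ones (replicate m False @ True # w) = Suc (count_ones w)"
  by (simp add: count_ones_def)

lemma count_ones_le_length: "count_ones w \<le> length w"
  by (simp add: count_ones_def)

lemma count_ones_eq_0_iff: "count_ones w = 0 \<longleftrightarrow> True \<notin> set w"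
  by (induction w) (auto simp: count_ones_def)

lemma True_notin_set_iff_eq_replicate_False:
  "length w = l \<and> True \<notin> set w \<longleftrightarrow> w = replicate l False"
proof
  assume "length w = l \<and> True \<notin> set w"
  then show "w = replicate l False"
    by (metis (full_types) replicate_length_same)
qed simp

lemma replicate_False_append_True_cases:
  assumes "count_ones u \<noteq> 0"
  obtains m w where "u = replicate m False @ True # w"
proof -
  have "True \<in> set u"
    using assms by (simp add: count_ones_eq_0_iff)
  then obtain ys w where u: "u = ys @ True # w" and "True \<notin> set ys"
    using split_list_first by metis
  then have "ys = replicate (length ys) False"
    using True_notin_set_iff_eq_replicate_False by blast
  with u that show thesis by blast
qed

lemma replicate_False_append_True_eq_iff:
  "replicate m False @ True # w = replicate m' False @ True # w' \<longleftrightarrow> m = m' \<and> w = w'"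
proof (induction m arbitrary: m')
  case 0
  then show ?case by (cases m') auto
next
  case (Suc m)
  then show ?case by (cases m') auto
qed

definition odd_zero_run_free_words :: "nat \<Rightarrow> nat \<Rightarrow> bool list set" where
  "odd_zero_run_free_words l c = {w. length w = l \<and> count_ones w = c \<and> avoids_odd_zero_runs w}"

lemma finite_odd_zero_run_free_words: "finite (odd_zero_run_free_words l c)"
proof (rule finite_subset)
  show "odd_zero_run_free_words l c \<subseteq> {w. set w \<subseteq> UNIV \<and> length w = l}"
    by (auto simp: odd_zero_run_free_words_def)
qed (rule finite_lists_length_eq, simp)

lemma card_odd_zero_run_free_words_0:
  "card (odd_zero_run_free_words l 0) = (if even l then 1 else 0)"
proof -
  have "w \<in> odd_zero_run_free_words l 0 \<longleftrightarrow> w = replicate l False \<and> even l" for w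
    unfolding odd_zero_run_free_words_def count_ones_eq_0_iff
    using True_notin_set_iff_eq_replicate_False[of w l]
    by (auto simp: avoids_odd_zero_runs_replicate_False)
  then have "odd_zero_run_free_words l 0 = (if even l then {replicate l False} else {})"
    by auto
  then show ?thesis by simp
qed

lemma odd_zero_run_free_words_Suc:
  "odd_zero_run_free_words l (Suc c) = (\<lambda>(m, w). replicate m False @ True # w) `
     (SIGMA m:{m \<in> {..<l - c}. even m}. odd_zero_run_free_words (l - Suc m) c)"
  (is "?W = ?f ` ?S")
proof
  show "?W \<subseteq> ?f ` ?S"
  proof
    fix u assume u: "u \<in> ?W"
    then have "count_ones u \<noteq> 0"
      by (simp add: odd_zero_run_free_words_def)
    then obtain m w where uw: "u = replicate m False @ True # w"
      by (rule replicate_False_append_True_cases)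
    with u have "length w = l - Suc m" "count_ones w = c" "even m" "avoids_odd_zero_runs w"
      by (auto simp: odd_zero_run_free_words_def count_ones_replicate_False_append_True
          avoids_odd_zero_runs_replicate_False_append_True)
    moreover have "m < l - c"
      using u count_ones_le_length[of w] unfolding uw
      by (auto simp: odd_zero_run_free_words_def count_ones_replicate_False_append_True)
    ultimately have "(m, w) \<in> ?S"
      by (simp add: odd_zero_run_free_words_def)
    with uw show "u \<in> ?f ` ?S" by force
  qed
next
  show "?f ` ?S \<subseteq> ?W"
    by (auto simp: odd_zero_run_free_words_def count_ones_replicate_False_append_True
        avoids_odd_zero_runs_replicate_False_append_True)
qed

lemma card_odd_zero_run_free_words_Suc:
  "card (odd_zero_run_free_words l (Suc c)) =
     (\<Sum>m \<in> {m \<in> {..<l - c}. even m}. card (odd_zero_run_free_words (l - Suc m) c))"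
proof -
  have "inj (\<lambda>(m, w). replicate m False @ True # w)"
    by (auto intro!: injI simp: replicate_False_append_True_eq_iff)
  then show ?thesis
    unfolding odd_zero_run_free_words_Suc
    by (simp add: card_image inj_on_subset card_SigmaI finite_odd_zero_run_free_words)
qed

lemma c1_eq_card_odd_zero_run_free_words:
  "1 \<le> k \<Longrightarrow> k \<le> n \<Longrightarrow> c1 n k = card (odd_zero_run_free_words (n - 1) (k - 1))"
proof (induction k arbitrary: n)
  case 0
  then show ?case by simp
next
  case (Suc k)
  show ?case
  proof (cases "k = 0")
    case True
    have "c1 n (Suc 0) = (\<Sum>i = 1..n. f0 i * (if n - i = 0 then 1 else 0))"
      using Suc.prems by simp
    also have "\<dots> = (\<Sum>i \<in> {n}. f0 i * (if n - i = 0 then 1 else 0))"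
      by (rule sum.mono_neutral_right) (use Suc.prems in auto)
    also have "\<dots> = card (odd_zero_run_free_words (n - 1) 0)"
      using Suc.prems by (simp add: card_odd_zero_run_free_words_0 f0_def)
    finally show ?thesis using True by simp
  next
    case False
    let ?W = "\<lambda>i. card (odd_zero_run_free_words (n - 1 - i) (k - 1))"
    have "c1 n (Suc k) = (\<Sum>i = 1..n - k. f0 i * c1 (n - i) k)"
      using Suc.prems by (simp add: Suc_diff_Suc)
    also have "\<dots> = (\<Sum>i = 1..n - k. f0 i * ?W i)"
    proof (intro sum.cong refl)
      fix i assume "i \<in> {1..n - k}"
      then have "k \<le> n - i" using Suc.prems by auto
      then show "f0 i * c1 (n - i) k = f0 i * ?W i"
        using Suc.IH[of "n - i"] False by simp
    qed
    also have "\<dots> = (\<Sum>m<n - k. f0 (Suc m) * ?W (Suc m))"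
      by (simp add: sum.atLeast1_atMost_eq)
    also have "\<dots> = (\<Sum>m \<in> {m \<in> {..<n - k}. even m}. ?W (Suc m))"
      unfolding sum.inter_filter[OF finite_lessThan] f0_def by (intro sum.cong) auto
    also have "\<dots> = card (odd_zero_run_free_words (n - 1) (Suc (k - 1)))"
      using card_odd_zero_run_free_words_Suc[of "n - 1" "k - 1"] False Suc.prems by simp
    finally show ?thesis using False by simp
  qed
qed

theorem corollary22:
  fixes n k :: nat
  assumes "1 \<le> k" and "k \<le> n"
  shows "c1 n k = card {w :: bool list. length w = n - 1 \<and> count_ones w = k - 1
                                        \<and> avoids_odd_zero_runs w}"
  using c1_eq_card_odd_zero_run_free_words[OF assms] by (simp add: odd_zero_run_free_words_def)

end
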